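(* Let $z$ be an upper bound on the maximum degree of $\Gamma_X$ and $p_0=(8z)^{-2}$. If the bulk error $Z(\eta)\leftarrow\mathcal N(p)$ with $p<p_0$, then the probability that some maximal connected set of marked vertices in the subgraph of $\Gamma_X$ induced on its bulk vertices contains both a vertex of layer $2$ and a vertex of layer $2T$ (i.e. $1-\Pr[\mathsf{CC}_X]$) is at most $$m_x\,\frac{(p/p_0)^{T/2}}{1-\sqrt{p/p_0}}.$$
   Context: $Q=(H^X,H^Z)$ is a CSS code: full-rank $H^X\in\mathbb F_2^{m_x\times n}$, $H^Z\in\mathbb F_2^{m_z\times n}$ with $H^X(H^Z)^T=0$; write $i\sim c$ if qubit $i$ is in the support of check $c$. $Q$ is $\ell$-LDPC (rows of weight $\le\ell$, each qubit in $\le\ell$ checks). A random Pauli error $E$ is local stochastic of rate $p$, $E\leftarrow\mathcal N(p)$, if $\Pr[S\subseteq\mathrm{supp}(E)]\le p^{|S|}$ for every set $S$ of qubits. ATG: fix $T\ge1$; graph with code vertices $q_{i,t}$ ($i\in[n]$, $t\in[2T+1]$), Z-check vertices $z_{c,t}$ ($c\in[m_z]$, $t$ odd), X-check vertices $x_{c,t}$ ($c\in[m_x]$, $t$ even); edges $q_{i,t}q_{i,t+1}$, $q_{i,t}z_{c,t}$ ($t$ odd, $H^Z_{c,i}=1$), $q_{i,t}x_{c,t}$ ($t$ even, $H^X_{c,i}=1$). Boundary $\partial=\{q_{i,1},q_{i,2T+1}\}$, bulk $\mathcal B=$ all other vertices. Decoding setup. A Z-type bulk error is $\eta\in\{0,1\}^{\mathcal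 B}$ with components $P_t\in\{0,1\}^n$ (code vertices of layer $t$, $2\le t\le 2T$) and $B_t$ (check vertices of layer $t$). The meta-check vectors are the indicator vectors $\alpha\in\{0,1\}^{\mathcal B}$ of the sets $\{z_{c,t-1},z_{c,t+1}\}\cup\{q_{i,t}:i\sim c\}$ ($t$ even, $c\in[m_z]$) and $\{x_{c,t-1},x_{c,t+1}\}\cup\{q_{i,t}:i\sim c\}$ ($t$ odd, $3\le t\le 2T-1$, $c\in[m_x]$). The decoder outputs a minimum-Hamming-weight $\beta\in\{0,1\}^{\mathcal B}$ with $\alpha\cdot\beta=\alpha\cdot\eta\pmod 2$ for all meta-check vectors $\alpha$; $R_t,C_t$ denote the components of $\beta$ analogous to $P_t,B_t$. X syndrome adjacency graph $\Gamma_X$: vertex set $\{q_{i,t}: i\in[n], t\text{ odd in }[2T+1]\}\cup\{x_{c,t}:c\in[m_x], t\text{ even in }[2T]\}$; two distinct vertices are adjacent iff both lie in one of the sets $\{x_{c,t-1},x_{c,t+1}\}\cup\{q_{i,t}:i\sim c\}$ (odd $3\le t\le2T-1$), $\{x_{c,2}\}\cup\{q_{i,1}:i\sim c\}$, or $\{x_{c,2T}\}\cup\{q_{i,2T+1}:i\sim c\}$ ($c\in[m_x]$). Its boundary vertices are $q_{i,1},q_{i,2T+1}$; all others are its bulk vertices. Marking of bulk vertices: $q_{i,t}$ is marked iff $(P_t)_i\ne(R_t)_i$; $x_{c,t}$ is marked iff $(B_t)_c\ne(C_t)_c$. $\mathsf{CC}_X$ is the event that no maximal connected set of marked vertices in the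 subgraph of $\Gamma_X$ induced on its bulk vertices contains both a vertex of layer $2$ and a vertex of layer $2T$. *)

theory Defs
  imports "HOL-Probability.Probability_Mass_Function"
begin

text \<open>Vertices of the ATG: Qv i t = q_{i,t}, Zv c t = z_{c,t}, Xv c t = x_{c,t}.
  Qubit indices i < n, check indices c < m, layers t in {1..2T+1}.
  Parity-check matrices are given as Boolean functions (H c i = True iff entry is 1).\<close>

datatype atg_vertex = Qv nat nat | Zv nat nat | Xv nat nat

fun layer :: "atg_vertex \<Rightarrow> nat" where
  "layer (Qv i t) = t" | "layer (Zv c t) = t" | "layer (Xv c t) = t"

text \<open>Full row rank over F_2: no nonempty set of rows sums to zero.\<close>
definition full_rank_F2 :: "nat \<Rightarrow> nat \<Rightarrow> (nat \<Rightarrow> nat \<Rightarrow> bool) \<Rightarrow> bool" where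
  "full_rank_F2 m n H \<longleftrightarrow>
     (\<forall>R \<subseteq> {..<m}. R \<noteq> {} \<longrightarrow> (\<exists>i<n. odd (card {c\<in>R. H c i})))"

definition css_code :: "nat \<Rightarrow> nat \<Rightarrow> nat \<Rightarrow> (nat \<Rightarrow> nat \<Rightarrow> bool) \<Rightarrow> (nat \<Rightarrow> nat \<Rightarrow> bool) \<Rightarrow> bool" where
  "css_code n mx mz HX HZ \<longleftrightarrow> full_rank_F2 mx n HX \<and> full_rank_F2 mz n HZ \<and>
     (\<forall>c<mx. \<forall>c'<mz. even (card {i. i < n \<and> HX c i \<and> HZ c' i}))"

text \<open>Bulk vertices of the ATG (everything except q_{i,1}, q_{i,2T+1}).\<close>
definition atg_bulk :: "nat \<Rightarrow> nat \<Rightarrow> nat \<Rightarrow> nat \<Rightarrow> atg_vertex set" where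
  "atg_bulk n mx mz T =
     {Qv i t | i t. i < n \<and> 2 \<le> t \<and> t \<le> 2*T}
   \<union> {Zv c t | c t. c < mz \<and> odd t \<and> 1 \<le> t \<and> t \<le> 2*T+1}
   \<union> {Xv c t | c t. c < mx \<and> even t \<and> 2 \<le> t \<and> t \<le> 2*T}"

text \<open>Supports of the meta-check vectors alpha.\<close>
definition meta_checks :: "nat \<Rightarrow> nat \<Rightarrow> nat \<Rightarrow> (nat \<Rightarrow> nat \<Rightarrow> bool) \<Rightarrow> (nat \<Rightarrow> nat \<Rightarrow> bool)
    \<Rightarrow> nat \<Rightarrow> atg_vertex set set" where
  "meta_checks n mx mz HX HZ T =
     {{Zv c (t-1), Zv c (t+1)} \<union> {Qv i t | i. i < n \<and> HZ c i} | c t.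
        c < mz \<and> even t \<and> 2 \<le> t \<and> t \<le> 2*T}
   \<union> {{Xv c (t-1), Xv c (t+1)} \<union> {Qv i t | i. i < n \<and> HX c i} | c t.
        c < mx \<and> odd t \<and> 3 \<le> t \<and> t \<le> 2*T - 1}"

definition same_metasyndrome :: "atg_vertex set set \<Rightarrow> (atg_vertex \<Rightarrow> bool) \<Rightarrow> (atg_vertex \<Rightarrow> bool) \<Rightarrow> bool" where
  "same_metasyndrome M eta beta \<longleftrightarrow>
     (\<forall>A\<in>M. even (card (A \<inter> {v. beta v})) = even (card (A \<inter> {v. eta v})))"

definition min_weight_decoding :: "nat \<Rightarrow> nat \<Rightarrow> nat \<Rightarrow> (nat \<Rightarrow> nat \<Rightarrow> bool) \<Rightarrow> (nat \<Rightarrow> nat \<Rightarrow> bool)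
    \<Rightarrow> nat \<Rightarrow> (atg_vertex \<Rightarrow> bool) \<Rightarrow> (atg_vertex \<Rightarrow> bool) \<Rightarrow> bool" where
  "min_weight_decoding n mx mz HX HZ T eta beta \<longleftrightarrow>
     {v. beta v} \<subseteq> atg_bulk n mx mz T \<and>
     same_metasyndrome (meta_checks n mx mz HX HZ T) eta beta \<and>
     (\<forall>beta'. {v. beta' v} \<subseteq> atg_bulk n mx mz T \<longrightarrow>
        same_metasyndrome (meta_checks n mx mz HX HZ T) eta beta' \<longrightarrow>
        card {v. beta v} \<le> card {v. beta' v})"

definition gx_vertices :: "nat \<Rightarrow> nat \<Rightarrow> nat \<Rightarrow> atg_vertex set" where
  "gx_vertices n mx T =
     {Qv i t | i t. i < n \<and> odd t \<and> 1 \<le> t \<and> t \<le> 2*T+1}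
   \<union> {Xv c t | c t. c < mx \<and> even t \<and> 2 \<le> t \<and> t \<le> 2*T}"

definition gx_sets :: "nat \<Rightarrow> nat \<Rightarrow> (nat \<Rightarrow> nat \<Rightarrow> bool) \<Rightarrow> nat \<Rightarrow> atg_vertex set set" where
  "gx_sets n mx HX T =
     {{Xv c (t-1), Xv c (t+1)} \<union> {Qv i t | i. i < n \<and> HX c i} | c t.
        c < mx \<and> odd t \<and> 3 \<le> t \<and> t \<le> 2*T - 1}
   \<union> {insert (Xv c 2) {Qv i 1 | i. i < n \<and> HX c i} | c. c < mx}
   \<union> {insert (Xv c (2*T)) {Qv i (2*T+1) | i. i < n \<and> HX c i} | c. c < mx}"

definition gx_adj :: "nat \<Rightarrow> nat \<Rightarrow> (nat \<Rightarrow> nat \<Rightarrow> bool) \<Rightarrow> nat \<Rightarrow> atg_vertex \<Rightarrow> atg_vertex \<Rightarrow> bool" where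
  "gx_adj n mx HX T u v \<longleftrightarrow> u \<noteq> v \<and> (\<exists>A\<in>gx_sets n mx HX T. u \<in> A \<and> v \<in> A)"

definition gx_bulk :: "nat \<Rightarrow> nat \<Rightarrow> nat \<Rightarrow> atg_vertex set" where
  "gx_bulk n mx T = gx_vertices n mx T - {Qv i t | i t. t = 1 \<or> t = 2*T+1}"

definition marked :: "nat \<Rightarrow> nat \<Rightarrow> nat \<Rightarrow> (atg_vertex \<Rightarrow> bool) \<Rightarrow> (atg_vertex \<Rightarrow> bool) \<Rightarrow> atg_vertex \<Rightarrow> bool" where
  "marked n mx T eta beta v \<longleftrightarrow> v \<in> gx_bulk n mx T \<and> eta v \<noteq> beta v"

definition CC_X :: "nat \<Rightarrow> nat \<Rightarrow> (nat \<Rightarrow> nat \<Rightarrow> bool) \<Rightarrow> nat \<Rightarrow> (atg_vertex \<Rightarrow> bool) \<Rightarrow> (atg_vertex \<Rightarrow> bool) \<Rightarrow> bool" where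
  "CC_X n mx HX T eta beta \<longleftrightarrow>
     \<not> (\<exists>u v. marked n mx T eta beta u \<and> marked n mx T eta beta v \<and>
              layer u = 2 \<and> layer v = 2*T \<and>
              (\<lambda>a b. gx_adj n mx HX T a b \<and> marked n mx T eta beta a \<and> marked n mx T eta beta b)\<^sup>*\<^sup>* u v)"

definition local_stochastic :: "atg_vertex set \<Rightarrow> real \<Rightarrow> (atg_vertex \<Rightarrow> bool) pmf \<Rightarrow> bool" where
  "local_stochastic B p D \<longleftrightarrow>
     (\<forall>eta\<in>set_pmf D. {v. eta v} \<subseteq> B) \<and>
     (\<forall>S \<subseteq> B. measure_pmf.prob D {eta. S \<subseteq> {v. eta v}} \<le> p ^ card S)"

end

theory Submission
  imports Defs
begin

text \<open>If \<open>CC\<^sub>X\<close> fails, the marked vertices reachable from a layer-2 vertex form a connected cluster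
  \<open>K\<close> of the bulk of \<open>\<Gamma>\<^sub>X\<close> reaching layer \<open>2T\<close>, so \<open>|K| \<ge> T\<close>. Flipping the decoder output on \<open>K\<close> does
  not change the meta-syndrome, so by minimality of the decoder the error \<open>\<eta>\<close> occupies at least
  half of \<open>K\<close>; by local stochasticity this has probability at most \<open>(2\<surd>p) ^ |K|\<close>. There are at most
  \<open>(4z) ^ s\<close> connected sets of size \<open>s\<close> containing a given vertex, so a union bound over the \<open>m\<^sub>x\<close>
  roots and all sizes \<open>s \<ge> T\<close> leaves the geometric series \<open>m\<^sub>x \<Sum>\<^bsub>s \<ge> T\<^esub> (8z\<surd>p) ^ s\<close>.\<close>

section \<open>Rooted connected sets\<close>

definition rooted_connected :: "('a \<Rightarrow> 'a \<Rightarrow> bool) \<Rightarrow> 'a \<Rightarrow> 'a set \<Rightarrow> bool" where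
  "rooted_connected E v K \<longleftrightarrow> v \<in> K \<and> (\<forall>b\<in>K. (\<lambda>x y. E x y \<and> x \<in> K \<and> y \<in> K)\<^sup>*\<^sup>* v b)"

definition vertex_boundary :: "('a \<Rightarrow> 'a \<Rightarrow> bool) \<Rightarrow> 'a set \<Rightarrow> 'a set \<Rightarrow> 'a set" where
  "vertex_boundary E V K = {w\<in>V - K. \<exists>a\<in>K. E a w}"

definition boundary_extensions :: "('a \<Rightarrow> 'a \<Rightarrow> bool) \<Rightarrow> 'a set \<Rightarrow> 'a set \<Rightarrow> 'a set set" where
  "boundary_extensions E V K = (\<union>) K ` Pow (V - (K \<union> vertex_boundary E V K))"

lemma rooted_connected_reachable:
  "rooted_connected E u {w. (\<lambda>a b. E a b \<and> M a \<and> M b)\<^sup>*\<^sup>* u w}"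
  unfolding rooted_connected_def
proof (intro conjI ballI)
  fix b assume "b \<in> {w. (\<lambda>a b. E a b \<and> M a \<and> M b)\<^sup>*\<^sup>* u w}"
  then have "(\<lambda>a b. E a b \<and> M a \<and> M b)\<^sup>*\<^sup>* u b" by simp
  then show "(\<lambda>x y. E x y \<and> x \<in> {w. (\<lambda>a b. E a b \<and> M a \<and> M b)\<^sup>*\<^sup>* u w}
                       \<and> y \<in> {w. (\<lambda>a b. E a b \<and> M a \<and> M b)\<^sup>*\<^sup>* u w})\<^sup>*\<^sup>* u b"
    by (induction rule: rtranclp_induct) (auto intro: rtranclp.rtrancl_into_rtrancl)
qed simp

lemma reachable_marked:
  "(\<lambda>a b. E a b \<and> M a \<and> M b)\<^sup>*\<^sup>* u w \<Longrightarrow> M u \<Longrightarrow> M w"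
  by (induction rule: rtranclp_induct) auto

lemma interval_subset_image_reachable:
  fixes g :: "'a \<Rightarrow> nat"
  assumes "R\<^sup>*\<^sup>* u w" and step: "\<And>a b. R a b \<Longrightarrow> g b \<le> g a + 1"
  shows "{g u..g w} \<subseteq> g ` {x. R\<^sup>*\<^sup>* u x}"
  using assms(1)
proof (induction rule: rtranclp_induct)
  case (step w w')
  then have "{g u..g w'} \<subseteq> {g u..g w} \<union> {g w'}" using assms(2) by fastforce
  then show ?case using step by (blast intro: rtranclp.rtrancl_into_rtrancl)
qed auto

lemma sum_Pow_power_card:
  fixes x y :: "'b :: comm_semiring_1"
  assumes "finite R"
  shows "(\<Sum>U\<in>Pow R. x ^ card U * y ^ card (R - U)) = (x + y) ^ card R"
  using prod_add[OF assms, of "\<lambda>_. x" "\<lambda>_. y"] by simp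

lemma card_vertex_boundary_le:
  assumes "finite V" "K \<subseteq> V" and deg: "\<forall>u\<in>V. card {w\<in>V. E u w} \<le> d"
  shows "card (vertex_boundary E V K) \<le> d * card K"
proof -
  have "vertex_boundary E V K \<subseteq> (\<Union>a\<in>K. {w\<in>V. E a w})"
    unfolding vertex_boundary_def by blast
  then have "card (vertex_boundary E V K) \<le> card (\<Union>a\<in>K. {w\<in>V. E a w})"
    using assms by (intro card_mono) (auto intro: finite_subset[of _ V])
  also have "\<dots> \<le> (\<Sum>a\<in>K. card {w\<in>V. E a w})"
    by (rule card_UN_le) (use assms finite_subset in blast)
  also have "\<dots> \<le> (\<Sum>a\<in>K. d)"
    using deg assms by (intro sum_mono) blast
  finally show ?thesis by (simp add: mult.commute)
qed

text \<open>A rooted connected set is recovered from any of its boundary extensions: it is the part of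
  the extension reachable from the root.\<close>
lemma rooted_connected_unique_in_extension:
  assumes K1: "rooted_connected E v K1" "K1 \<subseteq> V" and K2: "rooted_connected E v K2" "K2 \<subseteq> V"
    and W: "W \<in> boundary_extensions E V K1" "W \<in> boundary_extensions E V K2"
  shows "K1 = K2"
proof -
  have subset: "K \<subseteq> K'"
    if "rooted_connected E v K" "K \<subseteq> V" "rooted_connected E v K'"
      "W \<in> boundary_extensions E V K" "W \<in> boundary_extensions E V K'" for K K'
  proof
    fix b assume "b \<in> K"
    then have "(\<lambda>x y. E x y \<and> x \<in> K \<and> y \<in> K)\<^sup>*\<^sup>* v b"
      using that(1) unfolding rooted_connected_def by blast
    then show "b \<in> K'"
    proof (induction rule: rtranclp_induct)
      case base
      then show ?case using that(3) unfolding rooted_connected_def by blast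
    next
      case (step w w')
      then show ?case
        using that(2,4,5) unfolding boundary_extensions_def vertex_boundary_def by blast
    qed
  qed
  show ?thesis using subset[OF K1 K2(1)] subset[OF K2 K1(1)] W by blast
qed

lemma sum_boundary_extensions:
  fixes x y :: real
  assumes "finite V" "K \<subseteq> V" "x + y = 1"
  shows "(\<Sum>W\<in>boundary_extensions E V K. x ^ card W * y ^ card (V - W))
           = x ^ card K * y ^ card (vertex_boundary E V K)"
proof -
  define B where "B = vertex_boundary E V K"
  define R where "R = V - (K \<union> B)"
  have fin: "finite K" "finite B" "finite R"
    using assms finite_subset unfolding B_def R_def vertex_boundary_def by auto
  have "inj_on ((\<union>) K) (Pow R)"
    unfolding inj_on_def R_def by blast
  then have "(\<Sum>W\<in>boundary_extensions E V K. x ^ card W * y ^ card (V - W))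
      = (\<Sum>U\<in>Pow R. x ^ card (K \<union> U) * y ^ card (V - (K \<union> U)))"
    unfolding boundary_extensions_def B_def R_def by (simp add: sum.reindex)
  also have "\<dots> = (\<Sum>U\<in>Pow R. x ^ card K * y ^ card B * (x ^ card U * y ^ card (R - U)))"
  proof (rule sum.cong)
    fix U assume U: "U \<in> Pow R"
    then have "finite U" using fin finite_subset by blast
    moreover have "V - (K \<union> U) = B \<union> (R - U)"
      using U assms(2) unfolding R_def B_def vertex_boundary_def by blast
    moreover have "K \<inter> U = {}" "B \<inter> (R - U) = {}" using U unfolding R_def by blast+
    ultimately show "x ^ card (K \<union> U) * y ^ card (V - (K \<union> U))
        = x ^ card K * y ^ card B * (x ^ card U * y ^ card (R - U))"
      using fin by (simp add: card_Un_disjoint power_add algebra_simps)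
  qed simp
  also have "\<dots> = x ^ card K * y ^ card B"
    by (simp add: sum_distrib_left[symmetric] sum_Pow_power_card[OF fin(3)] assms(3))
  finally show ?thesis unfolding B_def .
qed

text \<open>The weights \<open>x ^ card W * (1 - x) ^ card (V - W)\<close> with \<open>x = 1 / (2 * d)\<close> form a probability
  distribution on the subsets of \<open>V\<close>; the boundary extensions of distinct rooted connected sets are
  disjoint and each carries weight at least \<open>(1 / (4 * d)) ^ card K\<close>.\<close>
lemma card_rooted_connected_sets_le:
  fixes E :: "'a \<Rightarrow> 'a \<Rightarrow> bool" and d :: nat
  assumes finV: "finite V" and deg: "\<forall>u\<in>V. card {w\<in>V. E u w} \<le> d" and d: "1 \<le> d"
  shows "real (card {K. K \<subseteq> V \<and> rooted_connected E v K \<and> card K = s}) \<le> (4 * real d) ^ s"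
proof -
  define C where "C = {K. K \<subseteq> V \<and> rooted_connected E v K \<and> card K = s}"
  define x :: real where "x = 1 / (2 * real d)"
  define y :: real where "y = 1 - x"
  define f where "f W = x ^ card W * y ^ card (V - W)" for W
  have x: "0 < x" "real d * x = 1 / 2" and y: "0 \<le> y" using d by (auto simp: x_def y_def field_simps)
  have finC: "finite C" unfolding C_def by (rule finite_subset[of _ "Pow V"]) (use finV in auto)
  have "1 / 2 \<le> y ^ d"
    using Bernoulli_inequality[of "- x" d] x(1) x(2) d by (simp add: y_def x_def field_simps)
  then have "1 / (4 * real d) \<le> x * y ^ d"
    using x mult_left_mono[of "1/2" "y ^ d" x] d by (simp add: x_def field_simps)
  then have "(1 / (4 * real d)) ^ s \<le> (x * y ^ d) ^ s"
    using d by (intro power_mono) auto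
  also have "(x * y ^ d) ^ s \<le> sum f (boundary_extensions E V K)" if "K \<in> C" for K
  proof -
    have KV: "K \<subseteq> V" and cK: "card K = s" using that unfolding C_def by auto
    have "y ^ (d * s) \<le> y ^ card (vertex_boundary E V K)"
      using card_vertex_boundary_le[OF finV KV deg] cK y \<open>1/2 \<le> y ^ d\<close>
      by (intro power_decreasing) (auto simp: y_def x_def)
    then have "x ^ s * y ^ (d * s) \<le> x ^ s * y ^ card (vertex_boundary E V K)"
      using x(1) by (intro mult_left_mono) auto
    then show ?thesis
      using sum_boundary_extensions[OF finV KV, of x y E] cK
      by (simp add: f_def y_def power_mult_distrib power_mult mult.commute)
  qed
  finally have "real (card C) * (1 / (4 * real d)) ^ s \<le> (\<Sum>K\<in>C. sum f (boundary_extensions E V K))"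
    using sum_mono[of C "\<lambda>_. (1 / (4 * real d)) ^ s"] by fastforce
  also have "\<dots> = sum f (\<Union>(boundary_extensions E V ` C))"
  proof (rule sum.UNION_disjoint[symmetric, OF finC])
    show "\<forall>K\<in>C. finite (boundary_extensions E V K)"
      using finV by (simp add: boundary_extensions_def)
    show "\<forall>K1\<in>C. \<forall>K2\<in>C. K1 \<noteq> K2 \<longrightarrow> boundary_extensions E V K1 \<inter> boundary_extensions E V K2 = {}"
    proof (intro ballI impI)
      fix K1 K2 assume "K1 \<in> C" "K2 \<in> C" "K1 \<noteq> K2"
      then show "boundary_extensions E V K1 \<inter> boundary_extensions E V K2 = {}"
        using rooted_connected_unique_in_extension[of E v K1 V K2] unfolding C_def by blast
    qed
  qed
  also have "\<dots> \<le> sum f (Pow V)"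
    using finV x y by (intro sum_mono2) (auto simp: f_def C_def boundary_extensions_def)
  also have "\<dots> = 1"
    unfolding f_def using sum_Pow_power_card[OF finV, of x y] by (simp add: y_def)
  finally show ?thesis using d unfolding C_def by (simp add: field_simps power_divide)
qed

section \<open>Clusters under local stochastic noise\<close>

lemma prob_majority_le:
  assumes noise: "\<And>S. S \<subseteq> B \<Longrightarrow> measure_pmf.prob D {eta. S \<subseteq> {v. eta v}} \<le> p ^ card S"
    and "K \<subseteq> B" "finite K" "0 \<le> p" "p \<le> 1"
  shows "measure_pmf.prob D {eta. card K \<le> 2 * card (K \<inter> {v. eta v})} \<le> (2 * sqrt p) ^ card K"
proof -
  define k where "k = (card K + 1) div 2"
  define Subs where "Subs = {S. S \<subseteq> K \<and> card S = k}"
  have finSubs: "finite Subs"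
    unfolding Subs_def using \<open>finite K\<close> by (simp add: finite_subset[of _ "Pow K"])
  have "{eta. card K \<le> 2 * card (K \<inter> {v. eta v})} \<subseteq> (\<Union>S\<in>Subs. {eta. S \<subseteq> {v. eta v}})"
  proof
    fix eta assume "eta \<in> {eta. card K \<le> 2 * card (K \<inter> {v. eta v})}"
    then have "k \<le> card (K \<inter> {v. eta v})" unfolding k_def by simp
    then obtain S where "S \<subseteq> K \<inter> {v. eta v}" "card S = k" by (rule obtain_subset_with_card_n)
    then show "eta \<in> (\<Union>S\<in>Subs. {eta. S \<subseteq> {v. eta v}})" unfolding Subs_def by blast
  qed
  then have "measure_pmf.prob D {eta. card K \<le> 2 * card (K \<inter> {v. eta v})}
        \<le> measure_pmf.prob D (\<Union>S\<in>Subs. {eta. S \<subseteq> {v. eta v}})"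
    by (intro measure_pmf.finite_measure_mono) auto
  also have "\<dots> \<le> (\<Sum>S\<in>Subs. measure_pmf.prob D {eta. S \<subseteq> {v. eta v}})"
    by (rule measure_pmf.finite_measure_subadditive_finite[OF finSubs]) auto
  also have "\<dots> \<le> (\<Sum>S\<in>Subs. p ^ k)"
    using noise \<open>K \<subseteq> B\<close> unfolding Subs_def by (intro sum_mono) auto
  also have "\<dots> = real (card K choose k) * p ^ k"
    using n_subsets[OF \<open>finite K\<close>, of k] unfolding Subs_def by simp
  also have "\<dots> \<le> 2 ^ card K * sqrt p ^ card K"
  proof (rule mult_mono)
    show "real (card K choose k) \<le> 2 ^ card K"
      using binomial_le_pow2 by (metis of_nat_le_iff of_nat_numeral of_nat_power)
    have "p ^ k = sqrt p ^ (2 * k)" using \<open>0 \<le> p\<close> by (simp add: power_mult)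
    also have "\<dots> \<le> sqrt p ^ card K"
      using \<open>0 \<le> p\<close> \<open>p \<le> 1\<close> by (intro power_decreasing) (auto simp: k_def)
    finally show "p ^ k \<le> sqrt p ^ card K" .
  qed (use \<open>0 \<le> p\<close> in auto)
  finally show ?thesis by (simp add: power_mult_distrib)
qed

lemma sum_power_atLeastAtMost_le:
  fixes q :: real
  assumes "0 \<le> q" "q < 1"
  shows "(\<Sum>s=T..N. q ^ s) \<le> q ^ T / (1 - q)"
proof (cases "N < T")
  case False
  then have "(\<Sum>s=T..N. q ^ s) = (q ^ T - q ^ Suc N) / (1 - q)"
    using sum_gp[of q T N] assms by auto
  also have "\<dots> \<le> q ^ T / (1 - q)"
    using assms by (intro divide_right_mono) auto
  finally show ?thesis .
qed (use assms in simp)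

lemma prob_rooted_clusters_le:
  fixes E :: "'a \<Rightarrow> 'a \<Rightarrow> bool" and d :: nat
  assumes "finite V" "\<forall>u\<in>V. card {w\<in>V. E u w} \<le> d" "1 \<le> d"
    and noise: "\<And>S. S \<subseteq> B \<Longrightarrow> measure_pmf.prob D {eta. S \<subseteq> {v. eta v}} \<le> p ^ card S" "V \<subseteq> B" "0 \<le> p" "p \<le> 1"
  shows "measure_pmf.prob D (\<Union>K\<in>{K. K \<subseteq> V \<and> rooted_connected E v K \<and> card K = s}.
            {eta. card K \<le> 2 * card (K \<inter> {v. eta v})}) \<le> (8 * real d * sqrt p) ^ s"
proof -
  define C where "C = {K. K \<subseteq> V \<and> rooted_connected E v K \<and> card K = s}"
  have "finite C"
    using \<open>finite V\<close> by (intro finite_subset[of C "Pow V"]) (auto simp: C_def)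
  then have "measure_pmf.prob D (\<Union>K\<in>C. {eta. card K \<le> 2 * card (K \<inter> {v. eta v})})
      \<le> (\<Sum>K\<in>C. measure_pmf.prob D {eta. card K \<le> 2 * card (K \<inter> {v. eta v})})"
    by (intro measure_pmf.finite_measure_subadditive_finite) auto
  also have "\<dots> \<le> (\<Sum>K\<in>C. (2 * sqrt p) ^ s)"
  proof (rule sum_mono)
    fix K assume "K \<in> C"
    then have "K \<subseteq> V" "card K = s" unfolding C_def by auto
    then have "K \<subseteq> B" "finite K" using noise(2) finite_subset[OF _ \<open>finite V\<close>] by auto
    then show "measure_pmf.prob D {eta. card K \<le> 2 * card (K \<inter> {v. eta v})} \<le> (2 * sqrt p) ^ s"
      using prob_majority_le[OF noise(1) _ _ noise(3,4)] \<open>card K = s\<close> by metis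
  qed
  also have "\<dots> = real (card C) * (2 * sqrt p) ^ s" by simp
  also have "\<dots> \<le> (4 * real d) ^ s * (2 * sqrt p) ^ s"
    using card_rooted_connected_sets_le[OF assms(1-3)] \<open>0 \<le> p\<close>
    by (intro mult_right_mono) (simp_all add: C_def)
  also have "\<dots> = (8 * real d * sqrt p) ^ s"
    unfolding power_mult_distrib[symmetric] by (simp add: ac_simps)
  finally show ?thesis unfolding C_def .
qed

lemma prob_rooted_cluster_event_le:
  fixes E :: "'a \<Rightarrow> 'a \<Rightarrow> bool" and z q :: real
  assumes "finite V" "finite L"
    and deg: "\<forall>u\<in>V. real (card {w\<in>V. E u w}) \<le> z" "1 \<le> z"
    and noise: "\<And>S. S \<subseteq> B \<Longrightarrow> measure_pmf.prob D {eta. S \<subseteq> {v. eta v}} \<le> p ^ card S" "V \<subseteq> B" "0 \<le> p"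
    and q: "q = 8 * z * sqrt p" "q < 1"
    and cover: "\<And>eta. eta \<in> set_pmf D \<Longrightarrow> eta \<in> A \<Longrightarrow> \<exists>u\<in>L. \<exists>K. K \<subseteq> V \<and>
                  rooted_connected E u K \<and> T \<le> card K \<and> card K \<le> 2 * card (K \<inter> {v. eta v})"
  shows "measure_pmf.prob D A \<le> real (card L) * (q ^ T / (1 - q))"
proof -
  define d where "d = nat \<lfloor>z\<rfloor>"
  have d: "1 \<le> d" "real d \<le> z" "\<forall>u\<in>V. card {w\<in>V. E u w} \<le> d"
    using deg unfolding d_def by (auto simp: le_nat_floor)
  have "0 \<le> q" using q deg(2) noise(3) by simp
  have "sqrt p \<le> q" using q(1) deg(2) noise(3) mult_right_mono[of 1 "8 * z" "sqrt p"] by simp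
  then have "sqrt p < 1" using q(2) by linarith
  then have "p \<le> 1" by simp
  define Ev where "Ev u s = (\<Union>K\<in>{K. K \<subseteq> V \<and> rooted_connected E u K \<and> card K = s}.
                              {eta. card K \<le> 2 * card (K \<inter> {v. eta v})})" for u s
  have "A \<inter> set_pmf D \<subseteq> (\<Union>u\<in>L. \<Union>s\<in>{T..card V}. Ev u s)"
  proof
    fix eta assume "eta \<in> A \<inter> set_pmf D"
    then obtain u K where "u \<in> L" "K \<subseteq> V" "rooted_connected E u K" "T \<le> card K"
      "card K \<le> 2 * card (K \<inter> {v. eta v})"
      using cover by blast
    moreover have "card K \<le> card V" using \<open>K \<subseteq> V\<close> \<open>finite V\<close> by (rule card_mono[rotated])
    ultimately have "eta \<in> Ev u (card K)" "card K \<in> {T..card V}" unfolding Ev_def by auto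
    then show "eta \<in> (\<Union>u\<in>L. \<Union>s\<in>{T..card V}. Ev u s)" using \<open>u \<in> L\<close> by blast
  qed
  then have "measure_pmf.prob D A \<le> measure_pmf.prob D (\<Union>u\<in>L. \<Union>s\<in>{T..card V}. Ev u s)"
    by (subst measure_Int_set_pmf[symmetric]) (intro measure_pmf.finite_measure_mono, auto)
  also have "\<dots> \<le> (\<Sum>u\<in>L. measure_pmf.prob D (\<Union>s\<in>{T..card V}. Ev u s))"
    using \<open>finite L\<close> by (intro measure_pmf.finite_measure_subadditive_finite) auto
  also have "\<dots> \<le> (\<Sum>u\<in>L. \<Sum>s=T..card V. measure_pmf.prob D (Ev u s))"
    by (intro sum_mono measure_pmf.finite_measure_subadditive_finite) simp_all
  also have "\<dots> \<le> (\<Sum>u\<in>L. \<Sum>s=T..card V. q ^ s)"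
  proof (intro sum_mono)
    fix u s
    have "measure_pmf.prob D (Ev u s) \<le> (8 * real d * sqrt p) ^ s"
      unfolding Ev_def using prob_rooted_clusters_le[OF \<open>finite V\<close> d(3,1) noise \<open>p \<le> 1\<close>] .
    also have "\<dots> \<le> q ^ s"
      using d(2) noise(3) q(1) by (intro power_mono) (auto intro: mult_right_mono)
    finally show "measure_pmf.prob D (Ev u s) \<le> q ^ s" .
  qed
  also have "\<dots> \<le> (\<Sum>u\<in>L. q ^ T / (1 - q))"
    using sum_power_atLeastAtMost_le[OF \<open>0 \<le> q\<close> q(2)] by (intro sum_mono) blast
  finally show ?thesis by simp
qed

section \<open>The X syndrome adjacency graph\<close>

lemma gx_bulk_Qv: "Qv i t \<in> gx_bulk n mx T \<longleftrightarrow> i < n \<and> odd t \<and> 3 \<le> t \<and> t < 2*T+1"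
proof -
  have "odd t \<Longrightarrow> t \<noteq> 1 \<Longrightarrow> 3 \<le> t" by presburger
  then show ?thesis unfolding gx_bulk_def gx_vertices_def by auto
qed

lemma gx_bulk_Xv: "Xv c t \<in> gx_bulk n mx T \<longleftrightarrow> c < mx \<and> even t \<and> 2 \<le> t \<and> t \<le> 2*T"
  unfolding gx_bulk_def gx_vertices_def by auto

lemma gx_bulk_Zv: "Zv c t \<notin> gx_bulk n mx T"
  unfolding gx_bulk_def gx_vertices_def by auto

lemma finite_gx_vertices: "finite (gx_vertices n mx T)"
proof (rule finite_subset)
  show "gx_vertices n mx T \<subseteq> case_prod Qv ` ({..<n} \<times> {..2*T+1}) \<union> case_prod Xv ` ({..<mx} \<times> {..2*T})"
    unfolding gx_vertices_def by auto
qed auto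

lemma finite_gx_bulk: "finite (gx_bulk n mx T)"
  using finite_gx_vertices unfolding gx_bulk_def by blast

lemma finite_atg_bulk: "finite (atg_bulk n mx mz T)"
proof (rule finite_subset)
  show "atg_bulk n mx mz T \<subseteq> case_prod Qv ` ({..<n} \<times> {..2*T+1}) \<union> case_prod Xv ` ({..<mx} \<times> {..2*T})
       \<union> case_prod Zv ` ({..<mz} \<times> {..2*T+1})"
    unfolding atg_bulk_def by auto
qed auto

lemma gx_bulk_subset_atg_bulk: "gx_bulk n mx T \<subseteq> atg_bulk n mx mz T"
proof
  fix w assume "w \<in> gx_bulk n mx T"
  then show "w \<in> atg_bulk n mx mz T"
    by (cases w) (auto simp: gx_bulk_Qv gx_bulk_Xv gx_bulk_Zv atg_bulk_def)
qed

lemma gx_bulk_layer_2: "w \<in> gx_bulk n mx T \<Longrightarrow> layer w = 2 \<Longrightarrow> w \<in> (\<lambda>c. Xv c 2) ` {..<mx}"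
  by (cases w) (auto simp: gx_bulk_Qv gx_bulk_Xv gx_bulk_Zv)

text \<open>Within the bulk, adjacent vertices lie in layers \<open>t - 1, t, t + 1\<close> for an odd \<open>t\<close>,
  so halving the layer number advances by at most one along an edge.\<close>
lemma gx_adj_layer_div_2_le:
  assumes "a \<in> gx_bulk n mx T" "b \<in> gx_bulk n mx T" "gx_adj n mx HX T a b"
  shows "layer b div 2 \<le> layer a div 2 + 1"
proof -
  obtain A where A: "A \<in> gx_sets n mx HX T" "a \<in> A" "b \<in> A"
    using assms(3) unfolding gx_adj_def by blast
  show ?thesis
    using A(1) unfolding gx_sets_def
  proof (elim UnE CollectE exE conjE)
    fix c t assume "A = {Xv c (t - 1), Xv c (t + 1)} \<union> {Qv i t |i. i < n \<and> HX c i}" "odd t" "3 \<le> t"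
    moreover obtain k where "t = 2 * k + 1" using \<open>odd t\<close> by (rule oddE)
    ultimately show ?thesis using A(2,3) by auto
  next
    fix c assume "A = insert (Xv c 2) {Qv i 1 |i. i < n \<and> HX c i}"
    then show ?thesis using A(2,3) assms(1,2) by (auto simp: gx_bulk_Qv)
  next
    fix c assume "A = insert (Xv c (2*T)) {Qv i (2*T+1) |i. i < n \<and> HX c i}"
    then show ?thesis using A(2,3) assms(1,2) by (auto simp: gx_bulk_Qv)
  qed
qed

lemma meta_checks_cases:
  assumes "A \<in> meta_checks n mx mz HX HZ T"
  shows "A \<inter> gx_bulk n mx T = {} \<or> (A \<in> gx_sets n mx HX T \<and> A \<subseteq> gx_bulk n mx T)"
  using assms unfolding meta_checks_def
proof (elim UnE CollectE exE conjE)
  fix c t assume "A = {Zv c (t - 1), Zv c (t + 1)} \<union> {Qv i t |i. i < n \<and> HZ c i}" "even t"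
  then show ?thesis by (auto simp: gx_bulk_Qv gx_bulk_Zv)
next
  fix c t assume A: "A = {Xv c (t - 1), Xv c (t + 1)} \<union> {Qv i t |i. i < n \<and> HX c i}"
    "c < mx" "odd t" "3 \<le> t" "t \<le> 2 * T - 1"
  then have "A \<in> gx_sets n mx HX T" unfolding gx_sets_def by blast
  moreover obtain k where "t = 2 * k + 1" using \<open>odd t\<close> by (rule oddE)
  then have "A \<subseteq> gx_bulk n mx T" using A by (auto simp: gx_bulk_Qv gx_bulk_Xv)
  ultimately show ?thesis by blast
qed

text \<open>By full rank, the X-check \<open>0\<close> has a qubit in its support, so \<open>x\<^bsub>0,2\<^esub>\<close> has a neighbour.\<close>
lemma one_le_gx_degree_bound:
  assumes "css_code n mx mz HX HZ" "0 < mx" "1 \<le> T"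
    and deg: "\<forall>v\<in>gx_vertices n mx T. real (card {w\<in>gx_vertices n mx T. gx_adj n mx HX T v w}) \<le> z"
  shows "1 \<le> z"
proof -
  have "full_rank_F2 mx n HX" using assms(1) unfolding css_code_def by blast
  moreover have "{0} \<subseteq> {..<mx}" using assms(2) by simp
  ultimately have "\<exists>i<n. odd (card {c\<in>{0::nat}. HX c i})"
    unfolding full_rank_F2_def by blast
  then obtain i where i: "i < n" "odd (card {c\<in>{0::nat}. HX c i})" by blast
  have "HX 0 i"
  proof (rule ccontr)
    assume "\<not> HX 0 i"
    then have empty: "{c\<in>{0::nat}. HX c i} = {}" by auto
    show False using i(2) unfolding empty by simp
  qed
  have "insert (Xv 0 2) {Qv i 1 |i. i < n \<and> HX 0 i} \<in> {insert (Xv c 2) {Qv i 1 |i. i < n \<and> HX c i} | c. c < mx}"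
    using assms(2) by blast
  then have hyperedge: "insert (Xv 0 2) {Qv i 1 |i. i < n \<and> HX 0 i} \<in> gx_sets n mx HX T"
    unfolding gx_sets_def by (rule UnI1[OF UnI2])
  have "Qv i 1 \<in> insert (Xv 0 2) {Qv i 1 |i. i < n \<and> HX 0 i}" using i(1) \<open>HX 0 i\<close> by blast
  then have "gx_adj n mx HX T (Xv 0 2) (Qv i 1)"
    unfolding gx_adj_def by (intro conjI bexI[OF _ hyperedge]) auto
  moreover have "Qv i 1 \<in> gx_vertices n mx T"
    using i(1) assms(3) unfolding gx_vertices_def by simp
  ultimately have "0 < card {w\<in>gx_vertices n mx T. gx_adj n mx HX T (Xv 0 2) w}"
    using finite_gx_vertices[of n mx T] by (subst card_gt_0_iff) auto
  moreover have "Xv 0 2 \<in> gx_vertices n mx T" using assms(2,3) unfolding gx_vertices_def by simp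
  ultimately show ?thesis using deg by fastforce
qed

lemma gx_bulk_degree_le:
  assumes "\<forall>v\<in>gx_vertices n mx T. real (card {w\<in>gx_vertices n mx T. gx_adj n mx HX T v w}) \<le> z"
  shows "\<forall>u\<in>gx_bulk n mx T. real (card {w\<in>gx_bulk n mx T. gx_adj n mx HX T u w}) \<le> z"
proof
  fix u assume u: "u \<in> gx_bulk n mx T"
  have bulk: "gx_bulk n mx T \<subseteq> gx_vertices n mx T" unfolding gx_bulk_def by blast
  then have "card {w\<in>gx_bulk n mx T. gx_adj n mx HX T u w}
      \<le> card {w\<in>gx_vertices n mx T. gx_adj n mx HX T u w}"
    using finite_gx_vertices by (intro card_mono) auto
  then show "real (card {w\<in>gx_bulk n mx T. gx_adj n mx HX T u w}) \<le> z"
    using assms u bulk by fastforce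
qed

lemma CC_X_no_checks: "CC_X n 0 HX T eta beta"
  using gx_bulk_layer_2[of _ n 0 T] unfolding CC_X_def marked_def by auto

section \<open>Marked clusters of a minimum-weight decoding\<close>

lemma card_sym_diff_add:
  assumes "finite X" "finite Y"
  shows "card ((X - Y) \<union> (Y - X)) + 2 * card (X \<inter> Y) = card X + card Y"
proof -
  have "card X = card (X - Y) + card (X \<inter> Y)" "card Y = card (Y - X) + card (X \<inter> Y)"
    using card_Int_Diff[of X Y] card_Int_Diff[of Y X] assms by (simp_all add: Int_commute)
  moreover have "card ((X - Y) \<union> (Y - X)) = card (X - Y) + card (Y - X)"
    using assms by (intro card_Un_disjoint) auto
  ultimately show ?thesis by simp
qed

lemma even_card_sym_diff:
  assumes "finite X" "finite Y"
  shows "even (card ((X - Y) \<union> (Y - X))) \<longleftrightarrow> (even (card X) \<longleftrightarrow> even (card Y))"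
  using arg_cong[OF card_sym_diff_add[OF assms], of even] by simp

text \<open>A hyperedge of \<open>\<Gamma>\<^sub>X\<close> that meets a maximal marked cluster \<open>K\<close> meets it exactly in its marked
  vertices, i.e. in the symmetric difference of \<open>\<eta>\<close> and \<open>\<beta>\<close>, whose parity the meta-checks see as even.\<close>
lemma even_card_meta_check_Int_cluster:
  assumes fin: "finite {v. eta v}" "finite {v. beta v}"
    and K: "K \<subseteq> {v. marked n mx T eta beta v}"
    and closed: "\<And>a b. a \<in> K \<Longrightarrow> marked n mx T eta beta b \<Longrightarrow> gx_adj n mx HX T a b \<Longrightarrow> b \<in> K"
    and same: "same_metasyndrome (meta_checks n mx mz HX HZ T) eta beta"
    and A: "A \<in> meta_checks n mx mz HX HZ T"
  shows "even (card (A \<inter> K))"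
proof (cases "A \<inter> K = {}")
  case False
  then obtain w where w: "w \<in> A" "w \<in> K" by blast
  then have "w \<in> gx_bulk n mx T" using K unfolding marked_def by blast
  then have A_gx: "A \<in> gx_sets n mx HX T" "A \<subseteq> gx_bulk n mx T"
    using meta_checks_cases[OF A] w(1) by blast+
  have "A \<inter> K = A \<inter> {v. marked n mx T eta beta v}"
  proof
    show "A \<inter> {v. marked n mx T eta beta v} \<subseteq> A \<inter> K"
    proof
      fix w' assume w': "w' \<in> A \<inter> {v. marked n mx T eta beta v}"
      show "w' \<in> A \<inter> K"
      proof (cases "w' = w")
        case False
        then have "gx_adj n mx HX T w w'" using A_gx(1) w w' unfolding gx_adj_def by blast
        then show ?thesis using closed[OF w(2)] w' by blast
      qed (use w in simp)
    qed
  qed (use K in blast)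
  also have "\<dots> = (A \<inter> {v. eta v} - A \<inter> {v. beta v}) \<union> (A \<inter> {v. beta v} - A \<inter> {v. eta v})"
    using A_gx(2) unfolding marked_def by auto
  finally show ?thesis
    using even_card_sym_diff[of "A \<inter> {v. eta v}" "A \<inter> {v. beta v}"] fin same A
    unfolding same_metasyndrome_def by simp
qed simp

lemma same_metasyndrome_flip_cluster:
  assumes fin: "finite {v. eta v}" "finite {v. beta v}"
    and K: "K \<subseteq> {v. marked n mx T eta beta v}"
    and closed: "\<And>a b. a \<in> K \<Longrightarrow> marked n mx T eta beta b \<Longrightarrow> gx_adj n mx HX T a b \<Longrightarrow> b \<in> K"
    and same: "same_metasyndrome (meta_checks n mx mz HX HZ T) eta beta"
  shows "same_metasyndrome (meta_checks n mx mz HX HZ T) eta (\<lambda>w. beta w \<noteq> (w \<in> K))"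
  unfolding same_metasyndrome_def
proof
  fix A assume A: "A \<in> meta_checks n mx mz HX HZ T"
  have "K \<subseteq> gx_bulk n mx T" using K unfolding marked_def by blast
  then have "finite K" using finite_subset finite_gx_bulk by blast
  have "A \<inter> {w. beta w \<noteq> (w \<in> K)} = (A \<inter> {v. beta v} - A \<inter> K) \<union> (A \<inter> K - A \<inter> {v. beta v})"
    by blast
  then have "even (card (A \<inter> {w. beta w \<noteq> (w \<in> K)})) = even (card (A \<inter> {v. beta v}))"
    using even_card_sym_diff[of "A \<inter> {v. beta v}" "A \<inter> K"] fin(2) \<open>finite K\<close>
      even_card_meta_check_Int_cluster[OF assms A] by simp
  then show "even (card (A \<inter> {w. beta w \<noteq> (w \<in> K)})) = even (card (A \<inter> {v. eta v}))"
    using same A unfolding same_metasyndrome_def by simp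
qed

text \<open>Flipping \<open>\<beta>\<close> on a maximal marked cluster keeps the meta-syndrome, so by minimality the
  decoder already disagrees with \<open>\<eta>\<close> on at least half of the cluster, i.e. \<open>\<eta>\<close> covers half of it.\<close>
lemma min_weight_decoding_cluster_le:
  assumes eta: "{v. eta v} \<subseteq> atg_bulk n mx mz T"
    and dec: "min_weight_decoding n mx mz HX HZ T eta beta"
    and K: "K \<subseteq> {v. marked n mx T eta beta v}"
    and closed: "\<And>a b. a \<in> K \<Longrightarrow> marked n mx T eta beta b \<Longrightarrow> gx_adj n mx HX T a b \<Longrightarrow> b \<in> K"
  shows "card K \<le> 2 * card (K \<inter> {v. eta v})"
proof -
  define Bs where "Bs = {v. beta v}"
  have Bs: "Bs \<subseteq> atg_bulk n mx mz T" "same_metasyndrome (meta_checks n mx mz HX HZ T) eta beta"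
    using dec unfolding min_weight_decoding_def Bs_def by blast+
  have "K \<subseteq> gx_bulk n mx T" using K unfolding marked_def by blast
  then have fin: "finite Bs" "finite {v. eta v}" "finite K"
    using finite_subset[OF Bs(1) finite_atg_bulk] finite_subset[OF eta finite_atg_bulk]
      finite_subset[OF _ finite_gx_bulk] by blast+
  have KA: "K \<subseteq> atg_bulk n mx mz T"
    using \<open>K \<subseteq> gx_bulk n mx T\<close> gx_bulk_subset_atg_bulk by blast
  have flip: "{w. beta w \<noteq> (w \<in> K)} = (Bs - K) \<union> (K - Bs)" unfolding Bs_def by auto
  have "{w. beta w \<noteq> (w \<in> K)} \<subseteq> atg_bulk n mx mz T"
    using Bs(1) KA unfolding flip by blast
  moreover have "same_metasyndrome (meta_checks n mx mz HX HZ T) eta (\<lambda>w. beta w \<noteq> (w \<in> K))"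
    using same_metasyndrome_flip_cluster[OF fin(2) _ K closed Bs(2)] fin(1) unfolding Bs_def .
  ultimately have "card Bs \<le> card {w. beta w \<noteq> (w \<in> K)}"
    using dec unfolding min_weight_decoding_def Bs_def by blast
  moreover have "card {w. beta w \<noteq> (w \<in> K)} + 2 * card (K \<inter> Bs) = card Bs + card K"
    using card_sym_diff_add[OF fin(1,3)] unfolding flip by (simp add: Int_commute)
  ultimately have "2 * card (K \<inter> Bs) \<le> card K" by linarith
  moreover have "K \<inter> {v. eta v} = K - Bs" using K unfolding marked_def Bs_def by auto
  moreover have "card K = card (K \<inter> Bs) + card (K - Bs)"
    by (rule card_Int_Diff[OF fin(3)])
  ultimately show ?thesis by simp
qed

lemma not_CC_X_cluster:
  assumes eta: "{v. eta v} \<subseteq> atg_bulk n mx mz T"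
    and dec: "min_weight_decoding n mx mz HX HZ T eta beta"
    and bad: "\<not> CC_X n mx HX T eta beta"
  shows "\<exists>u\<in>(\<lambda>c. Xv c 2) ` {..<mx}. \<exists>K. K \<subseteq> gx_bulk n mx T \<and> rooted_connected (gx_adj n mx HX T) u K
           \<and> T \<le> card K \<and> card K \<le> 2 * card (K \<inter> {v. eta v})"
proof -
  define M where "M = marked n mx T eta beta"
  define R where "R = (\<lambda>a b. gx_adj n mx HX T a b \<and> M a \<and> M b)"
  obtain u v where uv: "M u" "layer u = 2" "layer v = 2 * T" "R\<^sup>*\<^sup>* u v"
    using bad unfolding CC_X_def M_def R_def by blast
  define K where "K = {w. R\<^sup>*\<^sup>* u w}"
  have K_marked: "K \<subseteq> {v. marked n mx T eta beta v}"
    using reachable_marked uv(1) unfolding K_def R_def M_def by fastforce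
  then have K_bulk: "K \<subseteq> gx_bulk n mx T" unfolding marked_def by blast
  have "u \<in> (\<lambda>c. Xv c 2) ` {..<mx}"
    using gx_bulk_layer_2 uv(1,2) unfolding M_def marked_def by blast
  moreover have "rooted_connected (gx_adj n mx HX T) u K"
    unfolding K_def R_def by (rule rooted_connected_reachable)
  moreover have "T \<le> card K"
  proof -
    have "\<And>a b. R a b \<Longrightarrow> layer b div 2 \<le> layer a div 2 + 1"
      using gx_adj_layer_div_2_le unfolding R_def M_def marked_def by blast
    from interval_subset_image_reachable[where g = "\<lambda>w. layer w div 2", OF uv(4) this]
    have "{1..T} \<subseteq> (\<lambda>w. layer w div 2) ` K" using uv(2,3) unfolding K_def by simp
    then have "card {1..T} \<le> card K"
      using surj_card_le[OF finite_subset[OF K_bulk finite_gx_bulk]] by blast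
    then show ?thesis by simp
  qed
  moreover have "card K \<le> 2 * card (K \<inter> {v. eta v})"
  proof (rule min_weight_decoding_cluster_le[OF eta dec K_marked])
    fix a b assume "a \<in> K" "marked n mx T eta beta b" "gx_adj n mx HX T a b"
    then show "b \<in> K"
      using K_marked unfolding K_def R_def M_def by (auto intro: rtranclp.rtrancl_into_rtrancl)
  qed
  ultimately show ?thesis using K_bulk by blast
qed

lemma power2_powr_half:
  fixes q :: real
  assumes "0 \<le> q" "1 \<le> T"
  shows "(q\<^sup>2) powr (real T / 2) = q ^ T"
proof (cases "q = 0")
  case False
  then have "0 < q" using assms(1) by simp
  then have "(q\<^sup>2) powr (real T / 2) = (q powr 2) powr (real T / 2)" by (simp add: powr_realpow)
  also have "\<dots> = q powr (real T)" by (simp add: powr_powr)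
  also have "\<dots> = q ^ T" using \<open>0 < q\<close> by (simp add: powr_realpow)
  finally show ?thesis .
qed (use assms(2) in simp)

lemma sqrt_scaled_lt_1:
  fixes z p :: real
  assumes "1 \<le> z" "0 \<le> p" "p < 1 / (8 * z)\<^sup>2"
  shows "8 * z * sqrt p < 1"
proof -
  have "sqrt (1 / (8 * z)\<^sup>2) = 1 / (8 * z)"
    using assms(1) by (intro real_sqrt_unique) (simp_all add: power_divide)
  then have "sqrt p < 1 / (8 * z)"
    using real_sqrt_less_mono[OF assms(3)] by simp
  then show ?thesis using assms(1) by (simp add: field_simps)
qed

theorem lemma5p2:
  fixes n mx mz T :: nat
    and HX HZ :: "nat \<Rightarrow> nat \<Rightarrow> bool"
    and z p :: real
    and D :: "(atg_vertex \<Rightarrow> bool) pmf"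
    and dec :: "(atg_vertex \<Rightarrow> bool) \<Rightarrow> (atg_vertex \<Rightarrow> bool)"
  assumes css: "css_code n mx mz HX HZ"
    and T: "1 \<le> T"
    and deg: "\<forall>v\<in>gx_vertices n mx T.
               real (card {w\<in>gx_vertices n mx T. gx_adj n mx HX T v w}) \<le> z"
    and p_nonneg: "0 \<le> p"
    and p_small: "p < 1 / (8 * z)\<^sup>2"
    and noise: "local_stochastic (atg_bulk n mx mz T) p D"
    and decoder: "\<forall>eta. {v. eta v} \<subseteq> atg_bulk n mx mz T \<longrightarrow>
                    min_weight_decoding n mx mz HX HZ T eta (dec eta)"
  shows "measure_pmf.prob D {eta. \<not> CC_X n mx HX T eta (dec eta)}
           \<le> real mx * (p / (1 / (8 * z)\<^sup>2)) powr (real T / 2)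
               / (1 - sqrt (p / (1 / (8 * z)\<^sup>2)))"
proof (cases "mx = 0")
  case True
  then show ?thesis by (simp add: CC_X_no_checks)
next
  case False
  then have z: "1 \<le> z" using one_le_gx_degree_bound[OF css _ T deg] by simp
  define q where "q = 8 * z * sqrt p"
  have q: "0 \<le> q" "q < 1"
    using sqrt_scaled_lt_1[OF z p_nonneg p_small] z p_nonneg unfolding q_def by simp_all
  have "measure_pmf.prob D {eta. \<not> CC_X n mx HX T eta (dec eta)}
      \<le> real (card ((\<lambda>c. Xv c 2) ` {..<mx})) * (q ^ T / (1 - q))"
  proof (rule prob_rooted_cluster_event_le[OF finite_gx_bulk _ gx_bulk_degree_le[OF deg] z _
        gx_bulk_subset_atg_bulk p_nonneg q_def q(2)])
    show "\<And>S. S \<subseteq> atg_bulk n mx mz T \<Longrightarrow> measure_pmf.prob D {eta. S \<subseteq> {v. eta v}} \<le> p ^ card S"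
      using noise unfolding local_stochastic_def by blast
    fix eta assume eta: "eta \<in> set_pmf D" "eta \<in> {eta. \<not> CC_X n mx HX T eta (dec eta)}"
    then have support: "{v. eta v} \<subseteq> atg_bulk n mx mz T"
      using noise unfolding local_stochastic_def by blast
    show "\<exists>u\<in>(\<lambda>c. Xv c 2) ` {..<mx}. \<exists>K. K \<subseteq> gx_bulk n mx T
        \<and> rooted_connected (gx_adj n mx HX T) u K \<and> T \<le> card K \<and> card K \<le> 2 * card (K \<inter> {v. eta v})"
      using not_CC_X_cluster[OF support] decoder support eta(2) by blast
  qed simp
  also have "\<dots> \<le> real mx * (q ^ T / (1 - q))"
    using card_image_le[of "{..<mx}" "\<lambda>c. Xv c 2"] q by (intro mult_right_mono) simp_all
  also have "\<dots> = real mx * (q\<^sup>2) powr (real T / 2) / (1 - sqrt (q\<^sup>2))"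
    using q(1) T by (simp add: power2_powr_half)
  also have "q\<^sup>2 = p / (1 / (8 * z)\<^sup>2)"
    unfolding q_def using p_nonneg by (simp add: power_mult_distrib)
  finally show ?thesis .
qed

end
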